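(* Let $H$ be a connected graph of order $a \in \mathbb{N}$. Then for every $b \in \mathbb{N}$, \[1 + (a-1)(b-2) \le R_\mathrm{cyc}(H, P_b^\mathrm{mon}) \le 1 + (a-1)(b-1).\]
   Context: All graphs are finite, simple and undirected, and a graph of order $n$ has vertex set $\{0,1,\ldots,n-1\}$; $K_n$ is the complete graph on $\{0,\ldots,n-1\}$. A $2$-edge-coloring of $K_n$ assigns each edge a color in $\{1,2\}$. For a graph $H$ and such a coloring, an embedding of $H$ in color $j$ is an injective map $\varphi\colon V(H)\to V(K_n)$ such that for every edge $uv$ of $H$ the edge $\{\varphi(u),\varphi(v)\}$ has color $j$; it is increasing up to a cyclic permutation if there exists $t\in V(H)$ such that $(\varphi(t),\varphi(t+1),\ldots,\varphi(|H|-1),\varphi(0),\varphi(1),\ldots,\varphi(t-1))$ is an increasing sequence. The cyclic Ramsey number $R_\mathrm{cyc}(H_1,H_2)$ is the smallest $n\in\mathbb{N}$ such that every $2$-edge-coloring of $K_n$ admits an embedding of $H_1$ in color $1$ or of $H_2$ in color $2$ that is increasing up to a cyclic permutation. The monotone path $P_n^\mathrm{mon}$ is the graph of order $n$ in which two vertices are adjacent iff they are consecutive integers. *)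

theory Defs
  imports Main
begin

definition is_graph :: "nat \<Rightarrow> (nat \<Rightarrow> nat \<Rightarrow> bool) \<Rightarrow> bool" where
  "is_graph n E \<longleftrightarrow> (\<forall>u v. E u v \<longrightarrow> u < n \<and> v < n \<and> u \<noteq> v \<and> E v u)"

definition connected_graph :: "nat \<Rightarrow> (nat \<Rightarrow> nat \<Rightarrow> bool) \<Rightarrow> bool" where
  "connected_graph n E \<longleftrightarrow> is_graph n E \<and> 0 < n \<and>
     (\<forall>u v. u < n \<longrightarrow> v < n \<longrightarrow> E\<^sup>*\<^sup>* u v)"

definition mon_path :: "nat \<Rightarrow> nat \<Rightarrow> nat \<Rightarrow> bool" where
  "mon_path n u v \<longleftrightarrow> u < n \<and> v < n \<and> (v = Suc u \<or> u = Suc v)"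

definition two_coloring :: "nat \<Rightarrow> (nat \<Rightarrow> nat \<Rightarrow> nat) \<Rightarrow> bool" where
  "two_coloring n c \<longleftrightarrow> (\<forall>i j. i < n \<longrightarrow> j < n \<longrightarrow> i \<noteq> j \<longrightarrow>
       c i j = c j i \<and> c i j \<in> {1, 2})"

text \<open>Embedding of graph (m,E) in color col into K_n under c, increasing up to a
  cyclic permutation.\<close>
definition cyc_embedding ::
  "nat \<Rightarrow> (nat \<Rightarrow> nat \<Rightarrow> nat) \<Rightarrow> nat \<Rightarrow> nat \<Rightarrow> (nat \<Rightarrow> nat \<Rightarrow> bool) \<Rightarrow> (nat \<Rightarrow> nat) \<Rightarrow> bool" where
  "cyc_embedding n c col m E \<phi> \<longleftrightarrow>
     (\<forall>u < m. \<phi> u < n) \<and> inj_on \<phi> {0..<m} \<and>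
     (\<forall>u v. E u v \<longrightarrow> c (\<phi> u) (\<phi> v) = col) \<and>
     (\<exists>t < m. \<forall>i j. i < j \<longrightarrow> j < m \<longrightarrow> \<phi> ((t + i) mod m) < \<phi> ((t + j) mod m))"

definition cyc_ramsey_prop ::
  "nat \<Rightarrow> (nat \<Rightarrow> nat \<Rightarrow> bool) \<Rightarrow> nat \<Rightarrow> (nat \<Rightarrow> nat \<Rightarrow> bool) \<Rightarrow> nat \<Rightarrow> bool" where
  "cyc_ramsey_prop m1 E1 m2 E2 n \<longleftrightarrow>
     (\<forall>c. two_coloring n c \<longrightarrow>
        (\<exists>\<phi>. cyc_embedding n c 1 m1 E1 \<phi>) \<or> (\<exists>\<phi>. cyc_embedding n c 2 m2 E2 \<phi>))"

definition R_cyc ::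
  "nat \<Rightarrow> (nat \<Rightarrow> nat \<Rightarrow> bool) \<Rightarrow> nat \<Rightarrow> (nat \<Rightarrow> nat \<Rightarrow> bool) \<Rightarrow> nat" where
  "R_cyc m1 E1 m2 E2 = (LEAST n. cyc_ramsey_prop m1 E1 m2 E2 n)"

end

theory Submission
  imports Defs "HOL-Library.FuncSet"
begin

text \<open>Upper bound: label every vertex v by the number of vertices of a longest increasing
  colour-2 path ending at v. Without a colour-2 monotone path on b vertices these labels lie in
  {1..b-1}, and two vertices joined by a colour-2 edge get different labels. On
  1 + (a-1)(b-1) vertices some label is taken by a vertices, which then span an increasing
  colour-1 clique into which H embeds.

  Lower bound: on at most (a-1)(b-2) vertices, cut the vertices into consecutive blocks of size
  a-1 and colour an edge 1 iff it stays inside a block. A connected colour-1 copy of H lies in a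
  single block, which is too small. Along a cyclically increasing colour-2 monotone path, every
  step but the one that wraps around moves to a later block, so the path needs b-1 blocks.\<close>

definition inc_path :: "nat \<Rightarrow> (nat \<Rightarrow> nat \<Rightarrow> nat) \<Rightarrow> nat \<Rightarrow> nat \<Rightarrow> (nat \<Rightarrow> nat) \<Rightarrow> bool" where
  "inc_path n c col k \<psi> \<longleftrightarrow>
     (\<forall>i<k. \<psi> i < n) \<and> strict_mono_on {0..<k} \<psi> \<and> (\<forall>i. Suc i < k \<longrightarrow> c (\<psi> i) (\<psi> (Suc i)) = col)"

definition inc_path_to :: "nat \<Rightarrow> (nat \<Rightarrow> nat \<Rightarrow> nat) \<Rightarrow> nat \<Rightarrow> nat \<Rightarrow> nat \<Rightarrow> bool" where
  "inc_path_to n c col k v \<longleftrightarrow> 0 < k \<and> (\<exists>\<psi>. inc_path n c col k \<psi> \<and> \<psi> (k - 1) = v)"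

definition block_coloring :: "nat \<Rightarrow> nat \<Rightarrow> nat \<Rightarrow> nat" where
  "block_coloring d i j = (if i div d = j div d then 1 else 2)"

lemma two_coloringD:
  assumes "two_coloring n c" and "i < n" and "j < n" and "i \<noteq> j"
  shows "c i j = c j i" and "c i j = 1 \<or> c i j = 2"
  using assms by (simp_all add: two_coloring_def)

lemma cyc_embedding_if_strict_mono:
  assumes "0 < m" and "strict_mono_on {0..<m} \<phi>" and "\<forall>u<m. \<phi> u < n"
    and "\<forall>u v. E u v \<longrightarrow> c (\<phi> u) (\<phi> v) = col"
  shows "cyc_embedding n c col m E \<phi>"
  unfolding cyc_embedding_def
proof (intro conjI)
  show "inj_on \<phi> {0..<m}"
    using assms(2) by (rule strict_mono_on_imp_inj_on)
  show "\<exists>t<m. \<forall>i j. i < j \<longrightarrow> j < m \<longrightarrow> \<phi> ((t + i) mod m) < \<phi> ((t + j) mod m)"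
    using assms(1,2) by (intro exI[of _ 0]) (simp add: strict_mono_onD)
qed (use assms in auto)

lemma cyc_embedding_into_clique:
  assumes "is_graph a E" and "0 < a" and "S \<subseteq> {0..<n}" and "card S = a"
    and clique: "\<forall>u\<in>S. \<forall>v\<in>S. u \<noteq> v \<longrightarrow> c u v = col"
  shows "\<exists>\<phi>. cyc_embedding n c col a E \<phi>"
proof
  define xs where "xs = sorted_list_of_set S"
  have "finite S"
    using assms(3) finite_subset by blast
  then have len: "length xs = a" and set_xs: "set xs = S"
    using assms(4) by (simp_all add: xs_def)
  have in_S: "xs ! u \<in> S" if "u < a" for u
    using that len set_xs nth_mem by blast
  have "sorted_wrt (<) xs"
    by (simp add: xs_def)
  then have mono: "strict_mono_on {0..<a} ((!) xs)"
    by (intro strict_mono_onI) (simp add: len sorted_wrt_nth_less)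
  show "cyc_embedding n c col a E ((!) xs)"
  proof (rule cyc_embedding_if_strict_mono[OF assms(2) mono])
    show "\<forall>u<a. xs ! u < n"
      using assms(3) by (auto dest!: in_S)
    show "\<forall>u v. E u v \<longrightarrow> c (xs ! u) (xs ! v) = col"
    proof (intro allI impI)
      fix u v assume "E u v"
      then have "u < a" "v < a" "u \<noteq> v"
        using assms(1) by (auto simp: is_graph_def)
      then show "c (xs ! u) (xs ! v) = col"
        using clique in_S strict_mono_on_eqD[OF mono] by (metis atLeastLessThan_iff zero_le)
    qed
  qed
qed

lemma inc_path_prefix:
  assumes "inc_path n c col k \<psi>" and "j \<le> k"
  shows "inc_path n c col j \<psi>"
  using assms unfolding inc_path_def by (auto intro: monotone_on_subset)

lemma cyc_embedding_mon_path_if_inc_path: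
  assumes "two_coloring n c" and "0 < k" and path: "inc_path n c col k \<psi>"
  shows "cyc_embedding n c col k (mon_path k) \<psi>"
proof -
  have mono: "strict_mono_on {0..<k} \<psi>" and range: "\<forall>i<k. \<psi> i < n"
    and steps: "\<forall>i. Suc i < k \<longrightarrow> c (\<psi> i) (\<psi> (Suc i)) = col"
    using path by (simp_all add: inc_path_def)
  have "c (\<psi> u) (\<psi> v) = col" if "mon_path k u v" for u v
  proof -
    from that consider "v = Suc u" "v < k" | "u = Suc v" "u < k"
      by (auto simp: mon_path_def)
    then show ?thesis
    proof cases
      case 2
      then have "\<psi> v < \<psi> u"
        by (intro strict_mono_onD[OF mono]) auto
      then have "c (\<psi> u) (\<psi> v) = c (\<psi> v) (\<psi> u)"
        using 2 range by (intro two_coloringD(1)[OF assms(1)]) auto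
      also have "\<dots> = col"
        using 2 steps by simp
      finally show ?thesis .
    qed (use steps in auto)
  qed
  then show ?thesis
    using cyc_embedding_if_strict_mono[OF assms(2) mono range] by blast
qed

lemma inc_path_to_single: "v < n \<Longrightarrow> inc_path_to n c col 1 v"
  unfolding inc_path_to_def inc_path_def by (auto intro!: exI[of _ "\<lambda>_. v"] strict_mono_onI)

lemma inc_path_to_extend:
  assumes "inc_path_to n c col k u" and "u < v" and "v < n" and "c u v = col"
  shows "inc_path_to n c col (Suc k) v"
proof -
  obtain \<psi> where "0 < k" and path: "inc_path n c col k \<psi>" and last: "\<psi> (k - 1) = u"
    using assms(1) by (auto simp: inc_path_to_def)
  have mono: "strict_mono_on {0..<k} \<psi>"
    using path by (simp add: inc_path_def)
  have below: "\<psi> i < v" if "i < k" for i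
  proof -
    have "\<psi> i \<le> \<psi> (k - 1)"
      using that by (intro strict_mono_on_leD[OF mono]) auto
    then show ?thesis
      using last assms(2) by simp
  qed
  have "strict_mono_on {0..<Suc k} (\<psi>(k := v))"
    by (rule strict_mono_onI) (auto simp: below less_Suc_eq intro: strict_mono_onD[OF mono])
  moreover have "\<forall>i. Suc i < Suc k \<longrightarrow> c ((\<psi>(k := v)) i) ((\<psi>(k := v)) (Suc i)) = col"
    using path last assms(4) \<open>0 < k\<close> by (auto simp: inc_path_def less_Suc_eq)
  ultimately have "inc_path n c col (Suc k) (\<psi>(k := v))"
    using path assms(3) by (auto simp: inc_path_def less_Suc_eq)
  then show ?thesis
    by (auto simp: inc_path_to_def)
qed

lemma inc_path_labelling:
  assumes no_path: "\<nexists>\<psi>. inc_path n c col b \<psi>"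
  obtains f where "\<And>v. v < n \<Longrightarrow> f v \<in> {1..<b}"
    and "\<And>u v. u < v \<Longrightarrow> v < n \<Longrightarrow> c u v = col \<Longrightarrow> f u < f v"
proof
  have short: "k < b" if path: "inc_path_to n c col k v" for k v
  proof (rule ccontr)
    assume "\<not> k < b"
    obtain \<psi> where "inc_path n c col k \<psi>"
      using path by (auto simp: inc_path_to_def)
    then have "inc_path n c col b \<psi>"
      by (rule inc_path_prefix) (use \<open>\<not> k < b\<close> in simp)
    with no_path show False
      by blast
  qed
  define f where "f v = Max {k. inc_path_to n c col k v}" for v
  have finite: "finite {k. inc_path_to n c col k v}" for v
    by (rule finite_subset[of _ "{..<b}"]) (auto dest: short)
  have f_path: "inc_path_to n c col (f v) v" if "v < n" for v
    using Max_in[OF finite] inc_path_to_single[OF that] unfolding f_def by blast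
  show "f v \<in> {1..<b}" if "v < n" for v
    using f_path[OF that] short by (auto simp: inc_path_to_def)
  show "f u < f v" if "u < v" "v < n" "c u v = col" for u v
  proof -
    have "u < n"
      using that by simp
    then have "inc_path_to n c col (Suc (f u)) v"
      using inc_path_to_extend f_path that by blast
    then have "Suc (f u) \<le> f v"
      unfolding f_def[of v] by (intro Max_ge finite) simp
    then show ?thesis
      by simp
  qed
qed

lemma pigeonhole_fibre:
  assumes "finite A" and "finite B" and "f \<in> A \<rightarrow> B" and "card B * k < card A"
  obtains y where "y \<in> B" and "k < card (f -` {y} \<inter> A)"
proof -
  obtain x where "x \<in> A"
    using assms(4) by fastforce
  then have "B \<noteq> {}"
    using assms(3) by blast
  then obtain y where "y \<in> B" and "card A \<le> card (f -` {y} \<inter> A) * card B"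
    using pigeonhole_card[OF assms(3,1,2)] by blast
  with assms(4) have "k * card B < card (f -` {y} \<inter> A) * card B"
    unfolding mult.commute[of "card B" k] by linarith
  then have "k < card (f -` {y} \<inter> A)"
    using mult_less_cancel2 by blast
  with \<open>y \<in> B\<close> show thesis
    by (rule that)
qed

lemma clique_if_no_long_inc_path:
  assumes coloring: "two_coloring n c" and no_path: "\<nexists>\<psi>. inc_path n c 2 b \<psi>"
    and n: "(a - 1) * (b - 1) < n"
  shows "\<exists>S\<subseteq>{0..<n}. card S = a \<and> (\<forall>u\<in>S. \<forall>v\<in>S. u \<noteq> v \<longrightarrow> c u v = 1)"
proof -
  obtain f where f_range: "\<And>v. v < n \<Longrightarrow> f v \<in> {1..<b}"
    and f_less: "\<And>u v. u < v \<Longrightarrow> v < n \<Longrightarrow> c u v = 2 \<Longrightarrow> f u < f v"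
    using inc_path_labelling[OF no_path] by blast
  obtain k where "a - 1 < card (f -` {k} \<inter> {0..<n})"
    using pigeonhole_fibre[of "{0..<n}" "{1..<b}" f "a - 1"] f_range n by (auto simp: mult.commute)
  then obtain S where S: "S \<subseteq> f -` {k} \<inter> {0..<n}" and "card S = a"
    using obtain_subset_with_card_n[of a] by (metis Suc_pred' less_eq_Suc_le not_gr_zero zero_le)
  have ordered: "c u v = 1" if "u \<in> S" "v \<in> S" "u < v" for u v
  proof -
    have "u < n" "v < n" "f u = f v"
      using that S by auto
    then have "c u v \<noteq> 2"
      using f_less \<open>u < v\<close> by (metis less_irrefl)
    then show ?thesis
      using two_coloringD(2)[OF coloring \<open>u < n\<close> \<open>v < n\<close>] \<open>u < v\<close> by simp
  qed
  have "c u v = 1" if "u \<in> S" "v \<in> S" "u \<noteq> v" for u v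
  proof (cases "u < v")
    case False
    then have "c v u = 1"
      using that ordered[of v u] by simp
    moreover have "c u v = c v u"
      using that S by (intro two_coloringD(1)[OF coloring]) auto
    ultimately show ?thesis
      by simp
  qed (use that ordered in simp)
  with S \<open>card S = a\<close> show ?thesis
    by blast
qed

lemma cyc_ramsey_prop_upper:
  assumes "is_graph a E" and "0 < a" and "0 < b"
  shows "cyc_ramsey_prop a E b (mon_path b) (1 + (a - 1) * (b - 1))"
  unfolding cyc_ramsey_prop_def
proof (intro allI impI)
  fix c assume coloring: "two_coloring (1 + (a - 1) * (b - 1)) c"
  show "(\<exists>\<phi>. cyc_embedding (1 + (a - 1) * (b - 1)) c 1 a E \<phi>)
      \<or> (\<exists>\<phi>. cyc_embedding (1 + (a - 1) * (b - 1)) c 2 b (mon_path b) \<phi>)"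
  proof (cases "\<exists>\<psi>. inc_path (1 + (a - 1) * (b - 1)) c 2 b \<psi>")
    case True
    then show ?thesis
      using cyc_embedding_mon_path_if_inc_path[OF coloring assms(3)] by blast
  next
    case False
    then obtain S where "S \<subseteq> {0..<1 + (a - 1) * (b - 1)}" "card S = a"
      and "\<forall>u\<in>S. \<forall>v\<in>S. u \<noteq> v \<longrightarrow> c u v = 1"
      using clique_if_no_long_inc_path[OF coloring, of b a] by auto
    then show ?thesis
      using cyc_embedding_into_clique[OF assms(1,2)] by blast
  qed
qed

lemma two_coloring_block_coloring: "two_coloring n (block_coloring d)"
  unfolding two_coloring_def block_coloring_def by auto

lemma connected_in_one_block:
  assumes conn: "connected_graph a E" and "0 < d"
    and emb: "cyc_embedding n (block_coloring d) 1 a E \<phi>"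
  shows "a \<le> d"
proof -
  have inj: "inj_on \<phi> {0..<a}" and edges: "\<forall>u v. E u v \<longrightarrow> block_coloring d (\<phi> u) (\<phi> v) = 1"
    using emb by (simp_all add: cyc_embedding_def)
  have same_block: "\<phi> u div d = \<phi> 0 div d" if "E\<^sup>*\<^sup>* 0 u" for u
    using that
  proof (induction rule: rtranclp_induct)
    case (step y z)
    then have "block_coloring d (\<phi> y) (\<phi> z) = 1"
      using edges by blast
    with step.IH show ?case
      by (simp add: block_coloring_def split: if_splits)
  qed simp
  have block: "\<phi> u div d = \<phi> 0 div d" if "u < a" for u
  proof (rule same_block)
    show "E\<^sup>*\<^sup>* 0 u"
      using conn that by (simp add: connected_graph_def)
  qed
  have "inj_on (\<lambda>u. \<phi> u mod d) {0..<a}"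
  proof (rule inj_onI)
    fix u v assume u: "u \<in> {0..<a}" and v: "v \<in> {0..<a}" and "\<phi> u mod d = \<phi> v mod d"
    have "\<phi> u = \<phi> u div d * d + \<phi> u mod d"
      by simp
    also have "\<dots> = \<phi> v div d * d + \<phi> v mod d"
      using block[of u] block[of v] u v \<open>\<phi> u mod d = \<phi> v mod d\<close> by simp
    also have "\<dots> = \<phi> v"
      by simp
    finally have "\<phi> u = \<phi> v" .
    then show "u = v"
      by (rule inj_onD[OF inj _ u v])
  qed
  then have "card {0..<a} \<le> card {0..<d}"
    using \<open>0 < d\<close> by (intro card_inj_on_le) auto
  then show ?thesis
    by simp
qed

lemma steps_strict_but_one:
  fixes g :: "nat \<Rightarrow> nat"
  assumes mono: "\<And>i. Suc i < k \<Longrightarrow> g i \<le> g (Suc i)"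
    and strict: "\<And>i. Suc i < k \<Longrightarrow> i \<noteq> s \<Longrightarrow> g i < g (Suc i)"
    and "i < k"
  shows "i \<le> Suc (g i)"
proof -
  have "i \<le> g i + (if s < i then 1 else 0)"
    using \<open>i < k\<close>
  proof (induction i)
    case (Suc i)
    then show ?case
      using mono[of i] strict[of i] by (cases "i = s") auto
  qed simp
  then show ?thesis
    by (auto split: if_splits)
qed

lemma Suc_mod_less_unless_wrap:
  fixes t i b :: nat
  assumes "t < b" and "Suc i < b" and "i \<noteq> b - Suc t"
  shows "Suc ((t + i) mod b) < b"
proof (cases "t + i < b")
  case True
  then show ?thesis
    using assms by auto
next
  case False
  then have "(t + i) mod b = t + i - b"
    using assms by (simp add: le_mod_geq)
  then show ?thesis
    using assms by linarith
qed

lemma mon_path_in_blocks: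
  assumes "0 < d" and emb: "cyc_embedding n (block_coloring d) 2 b (mon_path b) \<phi>"
  shows "(b - 2) * d < n"
proof -
  obtain t where range: "\<forall>u<b. \<phi> u < n"
    and edges: "\<forall>u v. mon_path b u v \<longrightarrow> block_coloring d (\<phi> u) (\<phi> v) = 2" and "t < b"
    and inc: "\<forall>i j. i < j \<longrightarrow> j < b \<longrightarrow> \<phi> ((t + i) mod b) < \<phi> ((t + j) mod b)"
    using emb unfolding cyc_embedding_def by blast
  define \<psi> where "\<psi> i = \<phi> ((t + i) mod b)" for i
  have increasing: "\<psi> i < \<psi> (Suc i)" if "Suc i < b" for i
    using inc that unfolding \<psi>_def by (metis lessI add_Suc_right)
  have mono: "\<psi> i div d \<le> \<psi> (Suc i) div d" if "Suc i < b" for i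
    using increasing[OF that] by (simp add: div_le_mono)
  have strict: "\<psi> i div d < \<psi> (Suc i) div d" if "Suc i < b" "i \<noteq> b - Suc t" for i
  proof -
    have wrap_free: "Suc ((t + i) mod b) < b"
      using Suc_mod_less_unless_wrap[OF \<open>t < b\<close> that] .
    then have "(t + Suc i) mod b = Suc ((t + i) mod b)"
      by (simp add: mod_Suc)
    moreover have "mon_path b ((t + i) mod b) (Suc ((t + i) mod b))"
      using wrap_free by (simp add: mon_path_def)
    ultimately have "block_coloring d (\<psi> i) (\<psi> (Suc i)) = 2"
      using edges unfolding \<psi>_def by simp
    then have "\<psi> i div d \<noteq> \<psi> (Suc i) div d"
      by (simp add: block_coloring_def split: if_splits)
    then show ?thesis
      using mono[OF that(1)] by simp
  qed
  have "b - 1 < b"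
    using \<open>t < b\<close> by simp
  then have "b - 1 \<le> Suc (\<psi> (b - 1) div d)"
    using steps_strict_but_one[where g = "\<lambda>i. \<psi> i div d", OF mono strict] by blast
  then have "b - 2 \<le> \<psi> (b - 1) div d"
    by linarith
  then have "(b - 2) * d \<le> \<psi> (b - 1) div d * d"
    by (rule mult_le_mono1)
  also have "\<dots> \<le> \<psi> (b - 1)"
    by simp
  also have "\<dots> < n"
    using range \<open>t < b\<close> unfolding \<psi>_def by simp
  finally show ?thesis .
qed

lemma cyc_embedding_pos:
  assumes "cyc_embedding n c col m G \<phi>"
  shows "0 < n"
proof -
  obtain t where "t < m" and "\<forall>u<m. \<phi> u < n"
    using assms unfolding cyc_embedding_def by blast
  then show ?thesis
    by (metis gr_zeroI not_less_zero)
qed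

lemma not_cyc_ramsey_prop_lower:
  assumes conn: "connected_graph a E" and n: "n \<le> (a - 1) * (b - 2)"
  shows "\<not> cyc_ramsey_prop a E b (mon_path b) n"
proof
  assume "cyc_ramsey_prop a E b (mon_path b) n"
  then have embeddings: "(\<exists>\<phi>. cyc_embedding n (block_coloring (a - 1)) 1 a E \<phi>)
      \<or> (\<exists>\<phi>. cyc_embedding n (block_coloring (a - 1)) 2 b (mon_path b) \<phi>)"
    using two_coloring_block_coloring unfolding cyc_ramsey_prop_def by blast
  then have "0 < n"
    using cyc_embedding_pos by blast
  then have "0 < a - 1"
    using n by (metis gr0I mult_0 not_less_zero le_zero_eq)
  from embeddings show False
  proof
    assume "\<exists>\<phi>. cyc_embedding n (block_coloring (a - 1)) 1 a E \<phi>"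
    then have "a \<le> a - 1"
      using connected_in_one_block[OF conn \<open>0 < a - 1\<close>] by blast
    with \<open>0 < a - 1\<close> show False
      by linarith
  next
    assume "\<exists>\<phi>. cyc_embedding n (block_coloring (a - 1)) 2 b (mon_path b) \<phi>"
    then have "(b - 2) * (a - 1) < n"
      using mon_path_in_blocks[OF \<open>0 < a - 1\<close>] by blast
    with n show False
      by (simp add: mult.commute)
  qed
qed

lemma R_cyc_bounds:
  assumes "cyc_ramsey_prop m1 E1 m2 E2 N"
    and "\<And>n. n \<le> L \<Longrightarrow> \<not> cyc_ramsey_prop m1 E1 m2 E2 n"
  shows "L < R_cyc m1 E1 m2 E2" and "R_cyc m1 E1 m2 E2 \<le> N"
proof -
  have "cyc_ramsey_prop m1 E1 m2 E2 (R_cyc m1 E1 m2 E2)"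
    unfolding R_cyc_def using assms(1) by (rule LeastI)
  then show "L < R_cyc m1 E1 m2 E2"
    using assms(2) not_less by blast
  show "R_cyc m1 E1 m2 E2 \<le> N"
    unfolding R_cyc_def using assms(1) by (rule Least_le)
qed

theorem theorem4p5:
  fixes a b :: nat and E :: "nat \<Rightarrow> nat \<Rightarrow> bool"
  assumes "connected_graph a E" and "b \<ge> 1"
  shows "1 + (int a - 1) * (int b - 2) \<le> int (R_cyc a E b (mon_path b))
       \<and> int (R_cyc a E b (mon_path b)) \<le> 1 + (int a - 1) * (int b - 1)"
proof -
  let ?R = "R_cyc a E b (mon_path b)"
  have "is_graph a E" and "0 < a"
    using assms(1) by (simp_all add: connected_graph_def)
  then have "cyc_ramsey_prop a E b (mon_path b) (1 + (a - 1) * (b - 1))"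
    using cyc_ramsey_prop_upper assms(2) by simp
  then have "(a - 1) * (b - 2) < ?R" and "?R \<le> 1 + (a - 1) * (b - 1)"
    using R_cyc_bounds not_cyc_ramsey_prop_lower[OF assms(1)] by blast+
  then have "int ((a - 1) * (b - 2)) < int ?R" and "int ?R \<le> int (1 + (a - 1) * (b - 1))"
    by (simp_all only: of_nat_less_iff of_nat_le_iff)
  moreover have "(int a - 1) * (int b - 2) \<le> int ((a - 1) * (b - 2))"
    using \<open>0 < a\<close> assms(2) by (cases "b = 1") (auto simp: of_nat_diff)
  moreover have "int (1 + (a - 1) * (b - 1)) = 1 + (int a - 1) * (int b - 1)"
    using \<open>0 < a\<close> assms(2) by (simp add: of_nat_diff)
  ultimately show ?thesis
    by linarith
qed

end
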